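(* Let $K$ be a field, $S=K[x_1,\ldots,x_n]$, and let $I=(x_{i_1}^2,\ldots,x_{i_k}^2,J)\subset S$ be a monomial ideal generated in degree $2$, where $i_1,\ldots,i_k$ are distinct and $J$ is the ideal generated by all squarefree monomials in $I$. Let $G$ be the graph on vertex set $[n]$ with $\{i,j\}$ ($i\ne j$) an edge iff $x_ix_j\in J$, and let $\overline{G}$ be its complementary graph. Suppose $I$ has a linear resolution, and let $\Delta$ be a quasi-tree whose $1$-skeleton is $\overline{G}$ (such a quasi-tree exists under this hypothesis). Then each $i_j$, $j=1,\ldots,k$, is a free vertex of $\Delta$, and no two of the vertices $i_1,\ldots,i_k$ belong to the same facet of $\Delta$.
   Context: The complementary graph $\overline{G}$ has vertex set $[n]$ and as edges exactly the pairs $\{i,j\}$, $i\ne j$, that are not edges of $G$. For a simplicial complex $\Delta$ with set of facets $\mathcal F(\Delta)$: a facet $F$ is a leaf if either $F$ is the only facet, or there is a facet $G'\ne F$ with $H\cap F\subseteq G'\cap F$ for every facet $H\neq F$. $\Delta$ is a quasi-tree if its facets can be labelled $F_1,\ldots,F_m$ so that for each $i$, $F_i$ is a leaf of the subcomplex $\langle F_1,\ldots,F_i\rangle$ generated by $F_1,\ldots,F_i$. A vertex is a free vertex of $\Delta$ if it belongs to exactly one facet. The $1$-skeleton of $\Delta$ is the graph of its vertices and $1$-dimensional faces. Linear resolution: minimal graded free resolution with $F_i\cong S(-2-i)^{\beta_i}$. *)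

theory Defs
  imports Main "HOL-Library.Poly_Mapping"
begin

text \<open>Polynomials: finitely supported maps from exponent vectors (monomials) to coefficients.
  Variables are indexed by naturals; S n is the subring K[x_1,...,x_n].\<close>

type_synonym 'k mpoly = "(nat \<Rightarrow>\<^sub>0 nat) \<Rightarrow>\<^sub>0 'k"

definition polyring :: "nat \<Rightarrow> ('k::field) mpoly set" where
  "polyring n = {p. \<forall>m\<in>Poly_Mapping.keys p. Poly_Mapping.keys m \<subseteq> {1..n}}"

definition monom :: "(nat \<Rightarrow>\<^sub>0 nat) \<Rightarrow> ('k::field) mpoly" where
  "monom m = Poly_Mapping.single m 1"

definition var :: "nat \<Rightarrow> ('k::field) mpoly" where
  "var i = monom (Poly_Mapping.single i 1)"

definition mdeg :: "(nat \<Rightarrow>\<^sub>0 nat) \<Rightarrow> nat" where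
  "mdeg m = (\<Sum>i\<in>Poly_Mapping.keys m. Poly_Mapping.lookup m i)"

definition squarefree_monomial :: "(nat \<Rightarrow>\<^sub>0 nat) \<Rightarrow> bool" where
  "squarefree_monomial m \<longleftrightarrow> (\<forall>i. Poly_Mapping.lookup m i \<le> 1)"

text \<open>homogeneous of degree d (the zero polynomial is homogeneous of every degree)\<close>
definition homogeneous :: "nat \<Rightarrow> ('k::field) mpoly \<Rightarrow> bool" where
  "homogeneous d p \<longleftrightarrow> (\<forall>m\<in>Poly_Mapping.keys p. mdeg m = d)"

definition ideal_gen :: "nat \<Rightarrow> ('k::field) mpoly set \<Rightarrow> 'k mpoly set" where
  "ideal_gen n Gs = {(\<Sum>g\<in>F. c g * g) | F c. finite F \<and> F \<subseteq> Gs \<and> (\<forall>g\<in>F. c g \<in> polyring n)}"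

text \<open>Elements of S^b, represented as functions nat => S vanishing from index b on.\<close>
definition matmap :: "nat \<Rightarrow> nat \<Rightarrow> (nat \<Rightarrow> nat \<Rightarrow> ('k::field) mpoly) \<Rightarrow> (nat \<Rightarrow> 'k mpoly) \<Rightarrow> (nat \<Rightarrow> 'k mpoly)" where
  "matmap b b' d v = (\<lambda>r. if r < b then (\<Sum>c<b'. d r c * v c) else 0)"

definition fvecs' :: "nat \<Rightarrow> nat \<Rightarrow> (nat \<Rightarrow> ('k::field) mpoly) set" where
  "fvecs' n b = {v. (\<forall>c<b. v c \<in> polyring n) \<and> (\<forall>c\<ge>b. v c = 0)}"

text \<open>The ideal I of S = K[x_1..x_n] (generated in degree 2) has a linear resolution:
  there is a graded free resolution
  0 -> F_L -> ... -> F_1 -> F_0 -> I -> 0 with F_i = S(-2-i)^(beta i).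
  Concretely: F_0 -> I is given by beta 0 forms of degree 2 generating I, and each
  differential F_i -> F_(i-1) (i >= 1) is a beta(i-1) x beta i matrix of linear forms,
  and the complex is exact.  (A graded free resolution with these shifts is
  automatically minimal, so this is the minimal graded free resolution.)\<close>
definition linear_resolution :: "nat \<Rightarrow> ('k::field) mpoly set \<Rightarrow> bool" where
  "linear_resolution n I \<longleftrightarrow>
    (\<exists>(L::nat) (\<beta>::nat \<Rightarrow> nat) (d::nat \<Rightarrow> nat \<Rightarrow> nat \<Rightarrow> 'k mpoly).
       (\<forall>i r c. d i r c \<in> polyring n)
     \<and> (\<forall>c<\<beta> 0. homogeneous 2 (d 0 0 c))
     \<and> (\<forall>i\<in>{1..L}. \<forall>r<\<beta> (i - 1). \<forall>c<\<beta> i. homogeneous 1 (d i r c))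
     \<and> (\<lambda>v. matmap 1 (\<beta> 0) (d 0) v 0) ` fvecs' n (\<beta> 0) = I
     \<and> (\<forall>i<L. {v\<in>fvecs' n (\<beta> i). matmap (if i = 0 then 1 else \<beta> (i - 1)) (\<beta> i) (d i) v = (\<lambda>_. 0)}
               = matmap (\<beta> i) (\<beta> (Suc i)) (d (Suc i)) ` fvecs' n (\<beta> (Suc i)))
     \<and> {v\<in>fvecs' n (\<beta> L). matmap (if L = 0 then 1 else \<beta> (L - 1)) (\<beta> L) (d L) v = (\<lambda>_. 0)}
          = {\<lambda>_. 0})"

definition is_leaf :: "'a set set \<Rightarrow> 'a set \<Rightarrow> bool" where
  "is_leaf \<F> F \<longleftrightarrow> F \<in> \<F> \<and>
     (\<F> = {F} \<or> (\<exists>G'\<in>\<F>. G' \<noteq> F \<and> (\<forall>H\<in>\<F>. H \<noteq> F \<longrightarrow> H \<inter> F \<subseteq> G' \<inter> F)))"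

text \<open>A simplicial complex is represented by its set of facets: a finite family of
  finite, pairwise incomparable sets.\<close>
definition facet_family :: "'a set set \<Rightarrow> bool" where
  "facet_family \<F> \<longleftrightarrow> finite \<F> \<and> (\<forall>F\<in>\<F>. finite F) \<and>
     (\<forall>F\<in>\<F>. \<forall>G\<in>\<F>. F \<subseteq> G \<longrightarrow> F = G)"

text \<open>The facets of the subcomplex generated by F_1..F_i are F_1..F_i (they are pairwise
  incomparable).\<close>
definition quasi_tree :: "'a set set \<Rightarrow> bool" where
  "quasi_tree \<F> \<longleftrightarrow> facet_family \<F> \<and>
     (\<exists>Fs. distinct Fs \<and> set Fs = \<F> \<and>
        (\<forall>i<length Fs. is_leaf (set (take (Suc i) Fs)) (Fs ! i)))"

definition free_vertex :: "'a set set \<Rightarrow> 'a \<Rightarrow> bool" where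
  "free_vertex \<F> v \<longleftrightarrow> card {F\<in>\<F>. v \<in> F} = 1"

definition one_skeleton_is :: "'a set set \<Rightarrow> 'a set \<Rightarrow> ('a \<Rightarrow> 'a \<Rightarrow> bool) \<Rightarrow> bool" where
  "one_skeleton_is \<F> V E \<longleftrightarrow> \<Union>\<F> = V \<and>
     (\<forall>i\<in>V. \<forall>j\<in>V. i \<noteq> j \<longrightarrow> (E i j \<longleftrightarrow> (\<exists>F\<in>\<F>. i \<in> F \<and> j \<in> F)))"

end

theory Submission
  imports Defs
begin

(* Suppose I has a linear resolution and contains two coprime quadrics x^u and x^v.
   The Koszul syzygy x^v e_u - x^u e_v between their representations in terms of the generators
   must be a combination of linear syzygies.  Pairing the coefficient of x^u in the generators with
   the coefficient of x^v in a syzygy gives a linear functional which is 1 on the Koszul syzygy, but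
   vanishes on every linear syzygy unless a third generator of I divides x^u x^v.  For u = 2 e_i
   this says: if x_i^2 and x_a x_b lie in I with i not in {a, b}, then x_i x_a or x_i x_b is a
   generator.  In the complementary graph, a vertex i with x_i^2 in I is therefore adjacent to no
   j with x_j^2 in I (take a = b = j), and any two neighbours of i are adjacent.  Every clique of
   the 1-skeleton of a quasi-tree lies in a facet (strip off leaves one at a time), so the union of
   two facets through i lies in one facet, and i is free. *)

section \<open>Monomials\<close>

abbreviation lookup :: "('a \<Rightarrow>\<^sub>0 'b::zero) \<Rightarrow> 'a \<Rightarrow> 'b" where
  "lookup \<equiv> Poly_Mapping.lookup"

abbreviation keys :: "('a \<Rightarrow>\<^sub>0 'b::zero) \<Rightarrow> 'a set" where
  "keys \<equiv> Poly_Mapping.keys"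

abbreviation varexp :: "nat \<Rightarrow> nat \<Rightarrow>\<^sub>0 nat" where
  "varexp i \<equiv> Poly_Mapping.single i 1"

lemma mdeg_eq_sum_superset:
  assumes "finite S" "keys a \<subseteq> S"
  shows "mdeg a = (\<Sum>i\<in>S. lookup a i)"
  unfolding mdeg_def
  by (rule sum.mono_neutral_left) (use assms in \<open>auto simp: in_keys_iff\<close>)

lemma mdeg_add: "mdeg (a + b) = mdeg a + mdeg b"
proof -
  let ?S = "keys a \<union> keys b"
  have "mdeg (a + b) = (\<Sum>i\<in>?S. lookup a i + lookup b i)"
    using mdeg_eq_sum_superset[of ?S "a + b"] keys_add[of a b] by (simp add: lookup_add)
  then show ?thesis
    using mdeg_eq_sum_superset[of ?S a] mdeg_eq_sum_superset[of ?S b] by (simp add: sum.distrib)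
qed

lemma mdeg_0 [simp]: "mdeg 0 = 0"
  unfolding mdeg_def by simp

lemma mdeg_eq_0_iff [simp]: "mdeg a = 0 \<longleftrightarrow> a = 0"
  unfolding mdeg_def by (auto simp: in_keys_iff intro: poly_mapping_eqI)

lemma mdeg_single [simp]: "mdeg (Poly_Mapping.single i k) = k"
  unfolding mdeg_def by simp

lemma mdeg_Suc_split:
  assumes "mdeg w = Suc d"
  obtains p w' where "w = varexp p + w'" "mdeg w' = d"
proof -
  obtain p where p: "p \<in> keys w"
    using assms by (metis mdeg_eq_0_iff nat.distinct(1) keys_eq_empty ex_in_conv)
  define w' where "w' = w - varexp p"
  have "w = varexp p + w'"
    using p by (intro poly_mapping_eqI)
      (auto simp: w'_def lookup_add lookup_minus lookup_single when_def in_keys_iff)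
  moreover have "mdeg w' = d"
    using assms arg_cong[OF calculation, of mdeg] by (simp only: mdeg_add mdeg_single)
  ultimately show ?thesis by (rule that)
qed

lemma mdeg_2_cases:
  assumes "mdeg w = 2"
  obtains p q where "w = varexp p + varexp q"
  using assms by (metis mdeg_Suc_split mdeg_eq_0_iff numeral_2_eq_2 One_nat_def add_0_right)

lemma quadratic_divisor_of_square_times_quadratic:
  assumes "mdeg w = 2" "lookup w \<le> lookup (varexp i + varexp i + (varexp a + varexp b))"
    and "i \<noteq> a" "i \<noteq> b"
  shows "w \<in> {varexp i + varexp i, varexp i + varexp a, varexp i + varexp b, varexp a + varexp b}"
proof -
  obtain p q where w: "w = varexp p + varexp q" using assms(1) by (rule mdeg_2_cases)
  have le: "lookup (varexp p + varexp q) k \<le> lookup (varexp i + varexp i + (varexp a + varexp b)) k"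
    for k
    using assms(2) w by (simp add: le_fun_def)
  have "p \<in> {i, a, b}" "q \<in> {i, a, b}"
    using le[of p] le[of q] by (auto simp: lookup_add lookup_single when_def split: if_splits)
  then show ?thesis
    using le[of p] le[of q] assms(3,4) unfolding w
    by (auto simp: lookup_add lookup_single when_def add.commute split: if_splits)
qed

section \<open>Polynomials and monomial ideals\<close>

lemma var_mult_var: "var i * var j = monom (varexp i + varexp j)"
  unfolding var_def monom_def by (simp add: mult_single)

lemma polyring_mult:
  assumes "p \<in> polyring n" "q \<in> polyring n"
  shows "p * q \<in> polyring n"
  unfolding polyring_def
proof (intro CollectI ballI)
  fix m assume "m \<in> keys (p * q)"
  then obtain a b where "m = a + b" "a \<in> keys p" "b \<in> keys q"
    using keys_mult by blast
  with assms show "keys m \<subseteq> {1..n}"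
    using keys_add[of a b] unfolding polyring_def by blast
qed

lemma polyring_diff: "p \<in> polyring n \<Longrightarrow> q \<in> polyring n \<Longrightarrow> p - q \<in> polyring n"
  unfolding polyring_def using keys_diff[of p q] by blast

lemma polyring_monom: "keys m \<subseteq> {1..n} \<Longrightarrow> monom m \<in> polyring n"
  unfolding polyring_def monom_def by simp

lemma ideal_gen_generator: "g \<in> Gs \<Longrightarrow> g \<in> ideal_gen n Gs"
  unfolding ideal_gen_def mem_Collect_eq
  by (rule exI[of _ "{g}"], rule exI[of _ "\<lambda>_. 1"]) (simp add: polyring_def)

lemma keys_ideal_gen_monom:
  assumes "p \<in> ideal_gen n (monom ` A)" "X \<in> keys p"
  obtains m y where "m \<in> A" "X = y + m"
proof -
  obtain F c where p: "p = (\<Sum>g\<in>F. c g * g)" and F: "F \<subseteq> monom ` A"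
    using assms(1) unfolding ideal_gen_def by blast
  obtain g where g: "g \<in> F" "X \<in> keys (c g * g)"
    using assms(2) keys_sum[of "\<lambda>g. c g * g" F] unfolding p by blast
  obtain m where m: "m \<in> A" "g = monom m" using F g(1) by blast
  obtain y where "X = y + m"
    using keys_mult[of "c g" g] g(2) unfolding m(2) monom_def by auto
  with m(1) show ?thesis by (rule that)
qed

lemma keys_ideal_gen_monom_of_degree:
  assumes "p \<in> ideal_gen n (monom ` A)" "\<forall>m\<in>A. mdeg m = d" "X \<in> keys p" "mdeg X = d"
  shows "X \<in> A"
proof -
  obtain m y where "m \<in> A" "X = y + m" using assms(1,3) by (rule keys_ideal_gen_monom)
  with assms(2,4) show ?thesis by (simp add: mdeg_add)
qed

lemma lookup_mult_superset:
  fixes f g :: "'a::comm_monoid_add \<Rightarrow>\<^sub>0 'b::comm_semiring_0"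
  assumes "finite A" "finite B" "keys f \<subseteq> A" "keys g \<subseteq> B"
  shows "lookup (f * g) k = (\<Sum>a\<in>A. \<Sum>b\<in>B. lookup f a * lookup g b when k = a + b)"
proof -
  have inner: "(\<Sum>q. lookup g q when k = l + q) = (\<Sum>q\<in>B. lookup g q when k = l + q)" for l
    by (rule Sum_any.expand_superset) (use assms in \<open>auto simp: in_keys_iff when_def\<close>)
  have "lookup (f * g) k = (\<Sum>l. lookup f l * (\<Sum>q. lookup g q when k = l + q))"
    by (rule lookup_mult)
  also have "\<dots> = (\<Sum>l\<in>A. lookup f l * (\<Sum>q\<in>B. lookup g q when k = l + q))"
    unfolding inner
    by (rule Sum_any.expand_superset) (use assms in \<open>auto simp: in_keys_iff dest!: mult_not_zero\<close>)
  finally show ?thesis by (simp add: sum_distrib_left mult_when)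
qed

lemma lookup_mult_unique_decomposition:
  fixes f g :: "'a::comm_monoid_add \<Rightarrow>\<^sub>0 'b::comm_semiring_0"
  assumes "\<And>a b. a \<in> keys f \<Longrightarrow> b \<in> keys g \<Longrightarrow> k = a + b \<Longrightarrow> a = a0 \<and> b = b0"
    and "k = a0 + b0"
  shows "lookup (f * g) k = lookup f a0 * lookup g b0"
proof -
  let ?A = "insert a0 (keys f)" and ?B = "insert b0 (keys g)"
  have "lookup (f * g) k = (\<Sum>a\<in>?A. \<Sum>b\<in>?B. lookup f a * lookup g b when k = a + b)"
    by (rule lookup_mult_superset) auto
  also have "\<dots> = (\<Sum>a\<in>?A. \<Sum>b\<in>?B. if a = a0 \<and> b = b0 then lookup f a0 * lookup g b0 else 0)"
  proof (intro sum.cong refl)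
    fix a b
    show "(lookup f a * lookup g b when k = a + b)
        = (if a = a0 \<and> b = b0 then lookup f a0 * lookup g b0 else 0)"
      using assms(1)[of a b] assms(2)
      by (cases "lookup f a = 0 \<or> lookup g b = 0") (auto simp: when_def in_keys_iff)
  qed
  also have "\<dots> = lookup f a0 * lookup g b0"
  proof -
    have "(\<Sum>b\<in>?B. if a = a0 \<and> b = b0 then lookup f a0 * lookup g b0 else 0)
        = (if a = a0 then lookup f a0 * lookup g b0 else 0)" for a
      by (cases "a = a0") simp_all
    then show ?thesis by simp
  qed
  finally show ?thesis .
qed

lemma lookup_homogeneous_2_mult:
  assumes "homogeneous 2 p" "mdeg z = 2"
  shows "lookup (p * q) z = lookup p z * lookup q 0"
proof (rule lookup_mult_unique_decomposition)
  fix a b assume "a \<in> keys p" "z = a + b"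
  with assms show "a = z \<and> b = 0" by (auto simp: homogeneous_def mdeg_add)
qed simp

lemma lookup_monom_mult_self: "lookup (monom v * q) v = lookup q 0"
proof -
  have "lookup (monom v * q) v = lookup (monom v) v * lookup q 0"
    by (rule lookup_mult_unique_decomposition) (auto simp: monom_def)
  then show ?thesis by (simp add: monom_def)
qed

lemma lookup_monom_mult_other:
  assumes "mdeg u = mdeg v" "u \<noteq> v"
  shows "lookup (monom u * q) v = 0"
proof (rule ccontr)
  assume "lookup (monom u * q) v \<noteq> 0"
  then obtain b where "v = u + b"
    using keys_mult[of "monom u" q] by (auto simp: in_keys_iff monom_def)
  with assms show False by (simp add: mdeg_add)
qed

text \<open>In the theorem it is formed over an arbitrary field
  \<open>'c\<close>, unrelated to the coefficient field of \<open>I\<close>; whether it contains \<open>x\<^sub>i x\<^sub>j\<close>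
  does not depend on \<open>'c\<close>.\<close>

definition squarefree_part :: "nat \<Rightarrow> 'k::field mpoly set \<Rightarrow> 'c::field mpoly set" where
  "squarefree_part n I =
     ideal_gen n {monom m | m. squarefree_monomial m \<and> keys m \<subseteq> {1..n} \<and> monom m \<in> I}"

lemma var_mult_var_in_squarefree_part_iff:
  fixes I :: "'k::field mpoly set"
  assumes M_mon: "\<forall>m\<in>M. keys m \<subseteq> {1..n} \<and> mdeg m = 2"
    and I_def: "I = ideal_gen n (monom ` M)"
    and "i \<noteq> j"
  shows "(var i * var j :: 'c::field mpoly) \<in> squarefree_part n I \<longleftrightarrow> varexp i + varexp j \<in> M"
proof
  define S where "S = {m. squarefree_monomial m \<and> keys m \<subseteq> {1..n} \<and> monom m \<in> I}"
  have J_eq: "(squarefree_part n I :: 'c mpoly set) = ideal_gen n (monom ` S)"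
    unfolding squarefree_part_def S_def by (rule arg_cong[of _ _ "ideal_gen n"]) blast
  assume "(var i * var j :: 'c mpoly) \<in> squarefree_part n I"
  then have "(monom (varexp i + varexp j) :: 'c mpoly) \<in> ideal_gen n (monom ` S)"
    unfolding var_mult_var J_eq .
  moreover have "varexp i + varexp j \<in> keys (monom (varexp i + varexp j) :: 'c mpoly)"
    by (simp add: monom_def)
  ultimately obtain m y where "m \<in> S" and ij_eq: "varexp i + varexp j = y + m"
    by (rule keys_ideal_gen_monom)
  moreover have "m \<in> keys (monom m :: 'k mpoly)" by (simp add: monom_def)
  ultimately obtain m' y' where "m' \<in> M" "m = y' + m'"
    unfolding S_def I_def by (blast elim: keys_ideal_gen_monom)
  moreover from this have "mdeg (varexp i + varexp j) = mdeg y + mdeg y' + mdeg m'"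
    using ij_eq by (simp add: mdeg_add)
  ultimately have "y = 0" "y' = 0" using M_mon by (auto simp: mdeg_add)
  with ij_eq \<open>m = y' + m'\<close> \<open>m' \<in> M\<close> show "varexp i + varexp j \<in> M" by simp
next
  assume ij_M: "varexp i + varexp j \<in> M"
  have "squarefree_monomial (varexp i + varexp j)"
    using \<open>i \<noteq> j\<close> by (simp add: squarefree_monomial_def lookup_add lookup_single when_def)
  moreover have "keys (varexp i + varexp j) \<subseteq> {1..n}" using M_mon ij_M by blast
  moreover have "monom (varexp i + varexp j) \<in> I"
    unfolding I_def using ij_M by (intro ideal_gen_generator) simp
  ultimately show "(var i * var j :: 'c mpoly) \<in> squarefree_part n I"
    unfolding var_mult_var squarefree_part_def by (intro ideal_gen_generator) blast
qed

section \<open>Linear first syzygies\<close>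

lemma unit_vector_in_fvecs: "k < b \<Longrightarrow> (\<lambda>r. if r = k then 1 else 0) \<in> fvecs' n b"
  unfolding fvecs'_def polyring_def by auto

lemma matmap_unit_vector:
  "k < b' \<Longrightarrow> matmap b b' d (\<lambda>r. if r = k then 1 else 0) = (\<lambda>r. if r < b then d r k else 0)"
  unfolding matmap_def by (simp add: if_distrib[of "(*) _"] cong: if_cong)

lemma matmap_one_row: "matmap 1 b d x = (\<lambda>r. if r = 0 then (\<Sum>c<b. d 0 c * x c) else 0)"
  unfolding matmap_def by auto

lemma syzygies_generated_by_columns:
  assumes syz_eq: "{x\<in>fvecs' n b0. matmap 1 b0 d0 x = (\<lambda>_. 0)} = matmap b0 b1 d1 ` fvecs' n b1"
  shows "\<forall>k<b1. (\<Sum>c<b0. d0 0 c * d1 c k) = 0"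
    and "\<forall>s\<in>fvecs' n b0. (\<Sum>c<b0. d0 0 c * s c) = 0 \<longrightarrow> (\<exists>w. \<forall>c<b0. s c = (\<Sum>k<b1. d1 c k * w k))"
proof -
  let ?syz = "{x\<in>fvecs' n b0. matmap 1 b0 d0 x = (\<lambda>_. 0)}"
  have syz_iff: "x \<in> ?syz \<longleftrightarrow> x \<in> fvecs' n b0 \<and> (\<Sum>c<b0. d0 0 c * x c) = 0" for x
    unfolding matmap_one_row by (auto simp: fun_eq_iff)
  have "(\<Sum>c<b0. d0 0 c * d1 c k) = 0" if "k < b1" for k
  proof -
    have "matmap b0 b1 d1 (\<lambda>r. if r = k then 1 else 0) \<in> matmap b0 b1 d1 ` fvecs' n b1"
      using unit_vector_in_fvecs[OF that] by (rule imageI)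
    then have "(\<lambda>r. if r < b0 then d1 r k else 0) \<in> ?syz"
      unfolding syz_eq matmap_unit_vector[OF that] .
    then have "(\<Sum>c<b0. d0 0 c * (if c < b0 then d1 c k else 0)) = 0"
      unfolding syz_iff by (rule conjunct2)
    moreover have "(\<Sum>c<b0. d0 0 c * (if c < b0 then d1 c k else 0)) = (\<Sum>c<b0. d0 0 c * d1 c k)"
      by (rule sum.cong) auto
    ultimately show ?thesis by simp
  qed
  then show "\<forall>k<b1. (\<Sum>c<b0. d0 0 c * d1 c k) = 0" by blast
  have "\<exists>w. \<forall>c<b0. s c = (\<Sum>k<b1. d1 c k * w k)"
    if "s \<in> fvecs' n b0" "(\<Sum>c<b0. d0 0 c * s c) = 0" for s
  proof -
    have "s \<in> ?syz" using syz_iff[of s] that by blast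
    then obtain w where "s = matmap b0 b1 d1 w"
      unfolding syz_eq by (rule imageE)
    then show ?thesis by (auto simp: matmap_def)
  qed
  then show "\<forall>s\<in>fvecs' n b0. (\<Sum>c<b0. d0 0 c * s c) = 0 \<longrightarrow> (\<exists>w. \<forall>c<b0. s c = (\<Sum>k<b1. d1 c k * w k))"
    by blast
qed

lemma linear_resolution_first_syzygies:
  fixes I :: "'k::field mpoly set"
  assumes "linear_resolution n I"
  obtains b0 b1 :: nat and f :: "nat \<Rightarrow> 'k mpoly" and D :: "nat \<Rightarrow> nat \<Rightarrow> 'k mpoly"
  where "\<forall>c<b0. homogeneous 2 (f c) \<and> f c \<in> I"
    and "\<forall>p\<in>I. \<exists>a\<in>fvecs' n b0. (\<Sum>c<b0. f c * a c) = p"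
    and "\<forall>c<b0. \<forall>k<b1. homogeneous 1 (D c k)"
    and "\<forall>k<b1. (\<Sum>c<b0. f c * D c k) = 0"
    and "\<forall>s\<in>fvecs' n b0. (\<Sum>c<b0. f c * s c) = 0 \<longrightarrow> (\<exists>w. \<forall>c<b0. s c = (\<Sum>k<b1. D c k * w k))"
proof -
  obtain L \<beta> d where
        d0_hom: "\<forall>c<\<beta> 0. homogeneous 2 (d 0 0 c :: 'k mpoly)"
    and d_lin: "\<forall>i\<in>{1..L}. \<forall>r<\<beta> (i - 1). \<forall>c<\<beta> i. homogeneous 1 (d i r c)"
    and d0_image: "(\<lambda>x. matmap 1 (\<beta> 0) (d 0) x 0) ` fvecs' n (\<beta> 0) = I"
    and exact: "\<forall>i<L.
          {x\<in>fvecs' n (\<beta> i). matmap (if i = 0 then 1 else \<beta> (i - 1)) (\<beta> i) (d i) x = (\<lambda>_. 0)}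
          = matmap (\<beta> i) (\<beta> (Suc i)) (d (Suc i)) ` fvecs' n (\<beta> (Suc i))"
    and injective:
      "{x\<in>fvecs' n (\<beta> L). matmap (if L = 0 then 1 else \<beta> (L - 1)) (\<beta> L) (d L) x = (\<lambda>_. 0)}
          = {\<lambda>_. 0}"
    using assms unfolding linear_resolution_def by blast
  define b0 where "b0 = \<beta> 0"
  have f_gen: "\<forall>p\<in>I. \<exists>a\<in>fvecs' n b0. (\<Sum>c<b0. d 0 0 c * a c) = p"
    using d0_image unfolding b0_def matmap_one_row by auto
  have "d 0 0 c \<in> I" if "c < b0" for c
  proof -
    have "matmap 1 b0 (d 0) (\<lambda>r. if r = c then 1 else 0) 0 = d 0 0 c"
      using that by (simp add: matmap_unit_vector)
    then show ?thesis
      using d0_image unit_vector_in_fvecs[OF that] unfolding b0_def by force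
  qed
  with d0_hom have f_hom_I: "\<forall>c<b0. homogeneous 2 (d 0 0 c) \<and> d 0 0 c \<in> I"
    by (simp add: b0_def)
  show ?thesis
  proof (cases "L = 0")
    case True
    txt \<open>A resolution of length zero has no syzygies, so \<open>b1 = 0\<close> works.\<close>
    have "matmap b0 0 (d 1) w = (\<lambda>_. 0)" for w by (simp add: matmap_def fun_eq_iff)
    moreover have "(\<lambda>_. 0) \<in> fvecs' n 0" by (simp add: fvecs'_def)
    ultimately have "matmap b0 0 (d 1) ` fvecs' n 0 = {\<lambda>_. 0}" by auto
    with injective True
    have "{x\<in>fvecs' n b0. matmap 1 b0 (d 0) x = (\<lambda>_. 0)} = matmap b0 0 (d 1) ` fvecs' n 0"
      by (simp add: b0_def)
    from syzygies_generated_by_columns[OF this] show ?thesis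
      by (intro that[OF f_hom_I f_gen]) auto
  next
    case False
    have D_lin: "\<forall>c<b0. \<forall>k<\<beta> 1. homogeneous 1 (d 1 c k)"
      using d_lin False unfolding b0_def by auto
    have "{x\<in>fvecs' n b0. matmap 1 b0 (d 0) x = (\<lambda>_. 0)} = matmap b0 (\<beta> 1) (d 1) ` fvecs' n (\<beta> 1)"
      using exact[rule_format, of 0] False unfolding b0_def
      by (simp only: simp_thms if_True One_nat_def neq0_conv)
    from syzygies_generated_by_columns[OF this] show ?thesis
      by (rule that[OF f_hom_I f_gen D_lin])
  qed
qed

lemma unique_generator_split:
  assumes a_M: "a \<in> M" and sum_eq: "u + B = a + b'"
    and B_deg: "mdeg B = 1" and B_le: "lookup B \<le> lookup v" and v_deg: "mdeg v = 2"
    and disj: "keys u \<inter> keys v = {}"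
    and only_uv: "\<forall>w\<in>M. lookup w \<le> lookup (u + v) \<longrightarrow> w = u \<or> w = v"
  shows "a = u \<and> b' = B"
proof -
  have pointwise: "lookup u k + lookup B k = lookup a k + lookup b' k" for k
    using arg_cong[OF sum_eq, of "\<lambda>x. lookup x k"] by (simp add: lookup_add)
  have "lookup a \<le> lookup (u + v)"
  proof (rule le_funI)
    fix k
    have "lookup a k \<le> lookup u k + lookup B k" using pointwise[of k] by linarith
    also have "\<dots> \<le> lookup (u + v) k" using le_funD[OF B_le, of k] by (simp add: lookup_add)
    finally show "lookup a k \<le> lookup (u + v) k" .
  qed
  with only_uv a_M have "a = u \<or> a = v" by blast
  moreover have "a \<noteq> v"
  proof
    assume "a = v"
    have "lookup B k = lookup v k" for k
    proof (cases "k \<in> keys v")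
      case True
      then have "lookup u k = 0" using disj by (auto simp: in_keys_iff)
      with pointwise[of k] le_funD[OF B_le, of k] show ?thesis
        unfolding \<open>a = v\<close> by linarith
    next
      case False
      then show ?thesis using le_funD[OF B_le, of k] by (simp add: in_keys_iff)
    qed
    then have "B = v" by (rule poly_mapping_eqI)
    with B_deg v_deg show False by simp
  qed
  ultimately show ?thesis using sum_eq by simp
qed

lemma linear_syzygy_coeff_pairing_eq_0:
  fixes f l :: "nat \<Rightarrow> 'k::field mpoly"
  assumes f_keys: "\<forall>c<b. keys (f c) \<subseteq> M"
    and l_lin: "\<forall>c<b. homogeneous 1 (l c)"
    and syz: "(\<Sum>c<b. f c * l c) = 0"
    and v_deg: "mdeg v = 2"
    and disj: "keys u \<inter> keys v = {}"
    and only_uv: "\<forall>w\<in>M. lookup w \<le> lookup (u + v) \<longrightarrow> w = u \<or> w = v"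
    and B_le: "lookup B \<le> lookup v"
  shows "(\<Sum>c<b. lookup (f c) u * lookup (l c) B) = 0"
proof (cases "mdeg B = 1")
  case False
  then have "lookup (l c) B = 0" if "c < b" for c
    using l_lin that unfolding homogeneous_def by (metis in_keys_iff)
  then show ?thesis by simp
next
  case True
  have "lookup (f c * l c) (u + B) = lookup (f c) u * lookup (l c) B" if "c < b" for c
  proof (rule lookup_mult_unique_decomposition)
    fix a b' assume "a \<in> keys (f c)" "u + B = a + b'"
    with f_keys that show "a = u \<and> b' = B"
      using unique_generator_split[OF _ _ True B_le v_deg disj only_uv] by blast
  qed simp
  then have "(\<Sum>c<b. lookup (f c) u * lookup (l c) B) = lookup (\<Sum>c<b. f c * l c) (u + B)"
    by (simp add: lookup_sum)
  with syz show ?thesis by simp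
qed

lemma linear_syzygy_pairing_eq_0:
  fixes f l :: "nat \<Rightarrow> 'k::field mpoly"
  assumes "\<forall>c<b. keys (f c) \<subseteq> M"
    and "\<forall>c<b. homogeneous 1 (l c)"
    and "(\<Sum>c<b. f c * l c) = 0"
    and "mdeg v = 2"
    and "keys u \<inter> keys v = {}"
    and "\<forall>w\<in>M. lookup w \<le> lookup (u + v) \<longrightarrow> w = u \<or> w = v"
  shows "(\<Sum>c<b. lookup (f c) u * lookup (g * l c) v) = 0"
proof -
  define B where "B = (\<Union>c<b. keys (l c))"
  let ?t = "\<lambda>c a b'. lookup (f c) u * (lookup g a * lookup (l c) b' when v = a + b')"
  have "lookup (g * l c) v = (\<Sum>a\<in>keys g. \<Sum>b'\<in>B. lookup g a * lookup (l c) b' when v = a + b')"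
    if "c < b" for c
    by (rule lookup_mult_superset) (use that in \<open>auto simp: B_def\<close>)
  then have "(\<Sum>c<b. lookup (f c) u * lookup (g * l c) v) = (\<Sum>c<b. \<Sum>a\<in>keys g. \<Sum>b'\<in>B. ?t c a b')"
    by (simp add: sum_distrib_left)
  also have "\<dots> = (\<Sum>a\<in>keys g. \<Sum>c<b. \<Sum>b'\<in>B. ?t c a b')"
    by (rule sum.swap)
  also have "\<dots> = (\<Sum>a\<in>keys g. \<Sum>b'\<in>B. \<Sum>c<b. ?t c a b')"
    by (rule sum.cong[OF refl], rule sum.swap)
  also have "\<dots> = 0"
  proof (rule sum.neutral, rule ballI, rule sum.neutral, rule ballI)
    fix a b'
    show "(\<Sum>c<b. ?t c a b') = 0"
    proof (cases "v = a + b'")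
      case True
      then have "lookup b' \<le> lookup v" by (simp add: le_fun_def lookup_add)
      then have "(\<Sum>c<b. lookup (f c) u * lookup (l c) b') = 0"
        by (rule linear_syzygy_coeff_pairing_eq_0[OF assms])
      moreover have "(\<Sum>c<b. ?t c a b') = lookup g a * (\<Sum>c<b. lookup (f c) u * lookup (l c) b')"
        using True by (simp add: sum_distrib_left mult.left_commute)
      ultimately show ?thesis by simp
    qed simp
  qed
  finally show ?thesis .
qed

lemma linear_syzygies_combination_pairing_eq_0:
  fixes f s :: "nat \<Rightarrow> 'k::field mpoly"
  assumes f_keys: "\<forall>c<b0. keys (f c) \<subseteq> M"
    and D_lin: "\<forall>c<b0. \<forall>k<b1. homogeneous 1 (D c k)"
    and D_syz: "\<forall>k<b1. (\<Sum>c<b0. f c * D c k) = 0"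
    and v_deg: "mdeg v = 2"
    and disj: "keys u \<inter> keys v = {}"
    and only_uv: "\<forall>w\<in>M. lookup w \<le> lookup (u + v) \<longrightarrow> w = u \<or> w = v"
    and s: "\<forall>c<b0. s c = (\<Sum>k<b1. D c k * w k)"
  shows "(\<Sum>c<b0. lookup (f c) u * lookup (s c) v) = 0"
proof -
  have "(\<Sum>c<b0. lookup (f c) u * lookup (s c) v)
      = (\<Sum>c<b0. \<Sum>k<b1. lookup (f c) u * lookup (w k * D c k) v)"
    using s by (intro sum.cong refl) (simp add: lookup_sum sum_distrib_left mult.commute)
  also have "\<dots> = (\<Sum>k<b1. \<Sum>c<b0. lookup (f c) u * lookup (w k * D c k) v)"
    by (rule sum.swap)
  also have "\<dots> = 0"
    using linear_syzygy_pairing_eq_0[OF f_keys _ _ v_deg disj only_uv] D_lin D_syz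
    by (intro sum.neutral) simp
  finally show ?thesis .
qed

lemma koszul_syzygy_pairing_eq_1:
  fixes f a a' :: "nat \<Rightarrow> 'k::field mpoly"
  assumes "\<forall>c<b. homogeneous 2 (f c)" "(\<Sum>c<b. f c * a c) = monom u"
    and "mdeg u = 2" "mdeg v = 2" "u \<noteq> v"
  shows "(\<Sum>c<b. lookup (f c) u * lookup (monom v * a c - monom u * a' c) v) = 1"
proof -
  have "(\<Sum>c<b. lookup (f c) u * lookup (monom v * a c - monom u * a' c) v)
      = (\<Sum>c<b. lookup (f c * a c) u)"
  proof (rule sum.cong[OF refl])
    fix c assume "c \<in> {..<b}"
    then show "lookup (f c) u * lookup (monom v * a c - monom u * a' c) v = lookup (f c * a c) u"
      using assms lookup_monom_mult_self[of v "a c"] lookup_monom_mult_other[of u v "a' c"]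
        lookup_homogeneous_2_mult[of "f c" u "a c"] by (simp add: lookup_minus)
  qed
  also have "\<dots> = 1"
    using assms(2) by (simp add: lookup_sum[symmetric] monom_def)
  finally show ?thesis .
qed

lemma linear_resolution_third_generator:
  fixes I :: "'k::field mpoly set"
  assumes M_mon: "\<forall>m\<in>M. keys m \<subseteq> {1..n} \<and> mdeg m = 2"
    and I_def: "I = ideal_gen n (monom ` M)"
    and lin: "linear_resolution n I"
    and u_I: "monom u \<in> I" and v_I: "monom v \<in> I"
    and u_deg: "mdeg u = 2" and v_deg: "mdeg v = 2"
    and u_keys: "keys u \<subseteq> {1..n}" and v_keys: "keys v \<subseteq> {1..n}"
    and disj: "keys u \<inter> keys v = {}"
  shows "\<exists>w\<in>M. lookup w \<le> lookup (u + v) \<and> w \<noteq> u \<and> w \<noteq> v"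
proof (rule ccontr)
  assume "\<not> ?thesis"
  then have only_uv: "\<forall>w\<in>M. lookup w \<le> lookup (u + v) \<longrightarrow> w = u \<or> w = v" by blast
  obtain b0 b1 :: nat and f :: "nat \<Rightarrow> 'k mpoly" and D :: "nat \<Rightarrow> nat \<Rightarrow> 'k mpoly"
    where f_hom_I: "\<forall>c<b0. homogeneous 2 (f c) \<and> f c \<in> I"
      and f_gen: "\<forall>p\<in>I. \<exists>a\<in>fvecs' n b0. (\<Sum>c<b0. f c * a c) = p"
      and D_lin: "\<forall>c<b0. \<forall>k<b1. homogeneous 1 (D c k)"
      and D_syz: "\<forall>k<b1. (\<Sum>c<b0. f c * D c k) = 0"
      and syz_gen: "\<forall>s\<in>fvecs' n b0. (\<Sum>c<b0. f c * s c) = 0 \<longrightarrow>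
          (\<exists>w. \<forall>c<b0. s c = (\<Sum>k<b1. D c k * w k))"
    by (rule linear_resolution_first_syzygies[OF lin])
  have f_keys: "\<forall>c<b0. keys (f c) \<subseteq> M"
    using f_hom_I M_mon keys_ideal_gen_monom_of_degree[of _ n M 2]
    unfolding I_def homogeneous_def by blast
  obtain a where a: "a \<in> fvecs' n b0" "(\<Sum>c<b0. f c * a c) = monom u"
    using f_gen u_I by blast
  obtain a' where a': "a' \<in> fvecs' n b0" "(\<Sum>c<b0. f c * a' c) = monom v"
    using f_gen v_I by blast
  have "u \<noteq> v" using disj u_deg by auto
  txt \<open>The Koszul syzygy between the representations \<open>a\<close> of \<open>monom u\<close> and \<open>a'\<close> of \<open>monom v\<close>.\<close>
  define s where "s c = (if c < b0 then monom v * a c - monom u * a' c else 0)" for c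
  have s_fvecs: "s \<in> fvecs' n b0"
    using a(1) a'(1) u_keys v_keys
    by (auto simp: fvecs'_def s_def intro!: polyring_diff polyring_mult polyring_monom)
  have "(\<Sum>c<b0. f c * s c) = monom v * (\<Sum>c<b0. f c * a c) - monom u * (\<Sum>c<b0. f c * a' c)"
    by (simp add: s_def algebra_simps sum_subtractf sum_distrib_left)
  then have "(\<Sum>c<b0. f c * s c) = 0"
    using a(2) a'(2) by (simp add: mult.commute)
  with syz_gen s_fvecs obtain w where w: "\<forall>c<b0. s c = (\<Sum>k<b1. D c k * w k)"
    by blast
  have "(\<Sum>c<b0. lookup (f c) u * lookup (s c) v)
      = (\<Sum>c<b0. lookup (f c) u * lookup (monom v * a c - monom u * a' c) v)"
    by (intro sum.cong) (simp_all add: s_def)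
  also have "\<dots> = 1"
    using f_hom_I a(2) u_deg v_deg \<open>u \<noteq> v\<close> by (intro koszul_syzygy_pairing_eq_1) auto
  finally have "(\<Sum>c<b0. lookup (f c) u * lookup (s c) v) = 1" .
  moreover have "(\<Sum>c<b0. lookup (f c) u * lookup (s c) v) = 0"
    using f_keys D_lin D_syz v_deg disj only_uv w by (rule linear_syzygies_combination_pairing_eq_0)
  ultimately show False by simp
qed

lemma linear_resolution_square_times_quadric:
  fixes I :: "'k::field mpoly set"
  assumes M_mon: "\<forall>m\<in>M. keys m \<subseteq> {1..n} \<and> mdeg m = 2"
    and I_def: "I = ideal_gen n (monom ` M)"
    and lin: "linear_resolution n I"
    and square_I: "var i * var i \<in> I" and quadric_I: "monom (varexp a + varexp b) \<in> I"
    and range: "i \<in> {1..n}" "a \<in> {1..n}" "b \<in> {1..n}"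
    and "i \<noteq> a" "i \<noteq> b"
  shows "varexp i + varexp a \<in> M \<or> varexp i + varexp b \<in> M"
proof -
  let ?u = "varexp i + varexp i" and ?v = "varexp a + varexp b"
  have keys_pair: "keys (varexp p + varexp q) \<subseteq> {p, q}" for p q
    using keys_add[of "varexp p" "varexp q"] by auto
  have "\<exists>w\<in>M. lookup w \<le> lookup (?u + ?v) \<and> w \<noteq> ?u \<and> w \<noteq> ?v"
  proof (rule linear_resolution_third_generator[OF M_mon I_def lin])
    show "monom ?u \<in> I" using square_I unfolding var_mult_var .
    show "monom ?v \<in> I" by (rule quadric_I)
    show "mdeg ?u = 2" "mdeg ?v = 2" by (simp_all add: mdeg_add)
    show "keys ?u \<subseteq> {1..n}" "keys ?v \<subseteq> {1..n}" using keys_pair range by blast+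
    show "keys ?u \<inter> keys ?v = {}" using keys_pair \<open>i \<noteq> a\<close> \<open>i \<noteq> b\<close> by blast
  qed
  then obtain w where "w \<in> M" "lookup w \<le> lookup (?u + ?v)" "w \<noteq> ?u" "w \<noteq> ?v"
    by blast
  with M_mon \<open>i \<noteq> a\<close> \<open>i \<noteq> b\<close> show ?thesis
    using quadratic_divisor_of_square_times_quadratic[of w i a b] by auto
qed

section \<open>Cliques of the 1-skeleton of a quasi-tree\<close>

definition skeleton_clique :: "'a set set \<Rightarrow> 'a set \<Rightarrow> bool" where
  "skeleton_clique \<F> C \<longleftrightarrow> C \<subseteq> \<Union>\<F> \<and> (\<forall>a\<in>C. \<forall>b\<in>C. a \<noteq> b \<longrightarrow> (\<exists>F\<in>\<F>. a \<in> F \<and> b \<in> F))"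

lemma is_leaf_insertE:
  assumes leaf: "is_leaf (insert F \<G>) F" and "F \<notin> \<G>" "\<G> \<noteq> {}"
  obtains G' where "G' \<in> \<G>" "\<forall>H\<in>\<G>. H \<inter> F \<subseteq> G'"
proof -
  from \<open>F \<notin> \<G>\<close> \<open>\<G> \<noteq> {}\<close> have "insert F \<G> \<noteq> {F}" by blast
  with leaf obtain G' where G'_in: "G' \<in> insert F \<G>" "G' \<noteq> F"
    and G'_max: "\<forall>H\<in>insert F \<G>. H \<noteq> F \<longrightarrow> H \<inter> F \<subseteq> G' \<inter> F"
    unfolding is_leaf_def by blast
  have "H \<inter> F \<subseteq> G'" if "H \<in> \<G>" for H
  proof -
    from that \<open>F \<notin> \<G>\<close> have "H \<in> insert F \<G>" "H \<noteq> F" by auto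
    with G'_max have "H \<inter> F \<subseteq> G' \<inter> F" by blast
    then show ?thesis by blast
  qed
  moreover from G'_in have "G' \<in> \<G>" by simp
  ultimately show ?thesis using that by blast
qed

lemma skeleton_clique_leaf_step:
  assumes leaf: "is_leaf (insert F \<G>) F" and "F \<notin> \<G>"
    and clique: "skeleton_clique (insert F \<G>) C"
  shows "C \<subseteq> F \<or> skeleton_clique \<G> C"
proof (cases "C \<subseteq> \<Union>\<G>")
  case False
  then obtain a where a: "a \<in> C" "a \<notin> \<Union>\<G>" by blast
  have "b \<in> F" if "b \<in> C" for b
  proof (cases "b = a")
    case True
    with a clique show ?thesis unfolding skeleton_clique_def by blast
  next
    case False
    with a \<open>b \<in> C\<close> clique obtain H where "H \<in> insert F \<G>" "a \<in> H" "b \<in> H"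
      unfolding skeleton_clique_def by blast
    with a show ?thesis by blast
  qed
  then show ?thesis by blast
next
  case True
  show ?thesis
  proof (cases "\<G> = {}")
    case True
    with \<open>C \<subseteq> \<Union>\<G>\<close> show ?thesis by simp
  next
    case False
    with leaf \<open>F \<notin> \<G>\<close> obtain G' where "G' \<in> \<G>" and G': "\<forall>H\<in>\<G>. H \<inter> F \<subseteq> G'"
      by (rule is_leaf_insertE)
    have "\<exists>H\<in>\<G>. a \<in> H \<and> b \<in> H" if ab: "a \<in> C" "b \<in> C" "a \<noteq> b" for a b
    proof -
      obtain H where H: "H \<in> insert F \<G>" "a \<in> H" "b \<in> H"
        using clique ab unfolding skeleton_clique_def by blast
      obtain Ha Hb where "Ha \<in> \<G>" "a \<in> Ha" "Hb \<in> \<G>" "b \<in> Hb"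
        using ab(1,2) \<open>C \<subseteq> \<Union>\<G>\<close> by blast
      then have "H = F \<Longrightarrow> a \<in> G' \<and> b \<in> G'" using G' H(2,3) by blast
      with H \<open>G' \<in> \<G>\<close> show ?thesis by blast
    qed
    with \<open>C \<subseteq> \<Union>\<G>\<close> have "skeleton_clique \<G> C" unfolding skeleton_clique_def by blast
    then show ?thesis ..
  qed
qed

lemma leaf_order_clique_in_facet:
  assumes "\<forall>i<length Fs. is_leaf (set (take (Suc i) Fs)) (Fs ! i)" "distinct Fs"
    and "skeleton_clique (set Fs) C" "C \<noteq> {}"
  shows "\<exists>F\<in>set Fs. C \<subseteq> F"
  using assms
proof (induction Fs rule: rev_induct)
  case Nil
  then show ?case by (simp add: skeleton_clique_def)
next
  case (snoc F Fs)
  have "is_leaf (set (take (Suc i) Fs)) (Fs ! i)" if "i < length Fs" for i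
    using snoc.prems(1)[rule_format, of i] that by (simp add: nth_append)
  moreover have "is_leaf (insert F (set Fs)) F"
    using snoc.prems(1)[rule_format, of "length Fs"] by simp
  ultimately show ?case
    using skeleton_clique_leaf_step[of F "set Fs" C] snoc.IH snoc.prems(2-4) by auto
qed

lemma quasi_tree_clique_in_facet:
  assumes "quasi_tree \<Delta>" "skeleton_clique \<Delta> C" "C \<noteq> {}"
  shows "\<exists>F\<in>\<Delta>. C \<subseteq> F"
proof -
  obtain Fs where "distinct Fs" "set Fs = \<Delta>"
    "\<forall>i<length Fs. is_leaf (set (take (Suc i) Fs)) (Fs ! i)"
    using assms(1) unfolding quasi_tree_def by blast
  with assms(2,3) show ?thesis using leaf_order_clique_in_facet[of Fs C] by blast
qed

lemma quasi_tree_free_vertex: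
  assumes qt: "quasi_tree \<Delta>" and "i \<in> \<Union>\<Delta>"
    and link_clique: "\<And>a b. a \<noteq> i \<Longrightarrow> b \<noteq> i \<Longrightarrow> a \<noteq> b \<Longrightarrow> \<exists>F\<in>\<Delta>. i \<in> F \<and> a \<in> F \<Longrightarrow>
        \<exists>F\<in>\<Delta>. i \<in> F \<and> b \<in> F \<Longrightarrow> \<exists>F\<in>\<Delta>. a \<in> F \<and> b \<in> F"
  shows "free_vertex \<Delta> i"
proof -
  obtain F0 where F0: "F0 \<in> \<Delta>" "i \<in> F0" using \<open>i \<in> \<Union>\<Delta>\<close> by blast
  have incomparable: "\<forall>F\<in>\<Delta>. \<forall>G\<in>\<Delta>. F \<subseteq> G \<longrightarrow> F = G"
    using qt unfolding quasi_tree_def facet_family_def by blast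
  have unique: "F1 = F0" if F1: "F1 \<in> \<Delta>" "i \<in> F1" for F1
  proof -
    have "skeleton_clique \<Delta> (F0 \<union> F1)"
      unfolding skeleton_clique_def
    proof (intro conjI ballI impI)
      fix a b assume a: "a \<in> F0 \<union> F1" and b: "b \<in> F0 \<union> F1" and "a \<noteq> b"
      have a_i: "\<exists>F\<in>\<Delta>. i \<in> F \<and> a \<in> F" and b_i: "\<exists>F\<in>\<Delta>. i \<in> F \<and> b \<in> F"
        using a b F0 F1 by blast+
      show "\<exists>F\<in>\<Delta>. a \<in> F \<and> b \<in> F"
      proof (cases "a = i \<or> b = i")
        case True
        with a_i b_i show ?thesis by blast
      next
        case False
        with link_clique[OF _ _ \<open>a \<noteq> b\<close> a_i b_i] show ?thesis by blast
      qed
    next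
      show "F0 \<union> F1 \<subseteq> \<Union>\<Delta>" using F0(1) F1(1) by blast
    qed
    moreover have "F0 \<union> F1 \<noteq> {}" using F0(2) by blast
    ultimately obtain F where F: "F \<in> \<Delta>" "F0 \<subseteq> F" "F1 \<subseteq> F"
      using quasi_tree_clique_in_facet[OF qt] by (metis Un_subset_iff)
    then have "F0 = F" "F1 = F" using incomparable F0(1) F1(1) by auto
    then show "F1 = F0" by simp
  qed
  have "{F \<in> \<Delta>. i \<in> F} = {F0}" using F0 unique by blast
  then show ?thesis unfolding free_vertex_def by simp
qed

theorem proposition2p5:
  fixes n :: nat and M :: "(nat \<Rightarrow>\<^sub>0 nat) set" and I :: "('k::field) mpoly set"
    and \<Delta> :: "nat set set"
  assumes M_mon: "\<forall>m\<in>M. Poly_Mapping.keys m \<subseteq> {1..n} \<and> mdeg m = 2"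
    and I_def: "I = ideal_gen n (monom ` M)"
    and lin: "linear_resolution n I"
    and qt: "quasi_tree \<Delta>"
    and skel: "one_skeleton_is \<Delta> {1..n}
        (\<lambda>i j. i \<noteq> j \<and> var i * var j \<notin>
           ideal_gen n {monom m | m. squarefree_monomial m \<and> Poly_Mapping.keys m \<subseteq> {1..n} \<and> monom m \<in> I})"
  shows "(\<forall>i\<in>{1..n}. var i * var i \<in> I \<longrightarrow> free_vertex \<Delta> i)
       \<and> (\<forall>i\<in>{1..n}. \<forall>j\<in>{1..n}. i \<noteq> j \<and> var i * var i \<in> I \<and> var j * var j \<in> I
            \<longrightarrow> \<not> (\<exists>F\<in>\<Delta>. i \<in> F \<and> j \<in> F))"
proof -
  have vertices: "\<Union>\<Delta> = {1..n}"
    using skel unfolding one_skeleton_is_def by blast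
  have covered_iff: "(\<exists>F\<in>\<Delta>. a \<in> F \<and> b \<in> F) \<longleftrightarrow> varexp a + varexp b \<notin> M"
    if "a \<in> {1..n}" "b \<in> {1..n}" "a \<noteq> b" for a b
    using skel[folded squarefree_part_def] that
      var_mult_var_in_squarefree_part_iff[OF M_mon I_def \<open>a \<noteq> b\<close>]
    unfolding one_skeleton_is_def by blast
  have generator_in_I: "monom m \<in> I" if "m \<in> M" for m
    unfolding I_def using that by (intro ideal_gen_generator) simp
  note square_times_quadric = linear_resolution_square_times_quadric[OF M_mon I_def lin]
  show ?thesis
  proof (intro conjI ballI impI)
    fix i assume i: "i \<in> {1..n}" and square: "var i * var i \<in> I"
    show "free_vertex \<Delta> i"
    proof (rule quasi_tree_free_vertex[OF qt])
      show "i \<in> \<Union>\<Delta>" using i vertices by simp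
      fix a b assume "a \<noteq> i" "b \<noteq> i" "a \<noteq> b"
        and ia: "\<exists>F\<in>\<Delta>. i \<in> F \<and> a \<in> F" and ib: "\<exists>F\<in>\<Delta>. i \<in> F \<and> b \<in> F"
      then have ab: "a \<in> {1..n}" "b \<in> {1..n}" using vertices by blast+
      with i ia ib \<open>a \<noteq> i\<close> \<open>b \<noteq> i\<close> have "varexp i + varexp a \<notin> M" "varexp i + varexp b \<notin> M"
        using covered_iff by metis+
      then show "\<exists>F\<in>\<Delta>. a \<in> F \<and> b \<in> F"
        using covered_iff[OF ab \<open>a \<noteq> b\<close>] square_times_quadric[OF square generator_in_I] i ab
          \<open>a \<noteq> i\<close> \<open>b \<noteq> i\<close> by metis
    qed
  next
    fix i j assume ij: "i \<in> {1..n}" "j \<in> {1..n}"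
      and squares: "i \<noteq> j \<and> var i * var i \<in> I \<and> var j * var j \<in> I"
    then have "varexp i + varexp j \<in> M"
      using square_times_quadric[of i j j] by (simp add: var_mult_var)
    with ij squares show "\<not> (\<exists>F\<in>\<Delta>. i \<in> F \<and> j \<in> F)"
      using covered_iff by blast
  qed
qed

end
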